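(* Let $\mathbf L$ be an algebraic lattice with an equa-interior operator $\eta$ satisfying property (I9). Let $x$, $a_i$ and $z_i$ ($i\in I$, $I$ an arbitrary index set) be coatoms of $\mathbf L$ with $x\wedge z_i\le a_i$ properly for all $i\in I$. If $\bigwedge_{i\in I}a_i\not\le x$, then $\bigwedge_{i\in I}z_i\not\le x$.
   Context: An equa-interior operator on an algebraic lattice $\mathbf L$ is a map $\eta:L\to L$ such that for all $x,y,z\in L$: (I1) $\eta(x)\le x$; (I2) $x\ge y$ implies $\eta(x)\ge\eta(y)$; (I3) $\eta^2(x)=\eta(x)$; (I4) $\eta(1)=1$; (I5) if $\eta(x)=u$ for all $x\in X\subseteq L$ then $\eta(\bigvee X)=u$; (I6) $\eta(x)\vee(y\wedge z)=(\eta(x)\vee y)\wedge(\eta(x)\vee z)$; (I7) the image $\eta(L)$ is the complete join subsemilattice of $L$ generated by the elements of $\eta(L)$ that are compact in $\mathbf L$; (I8) there is a compact element $w\in L$ with $\eta(w)=w$ such that the interval $[w,1]$ is isomorphic to the congruence lattice of a join semilattice with $0$. Define $\tau(y)=\bigvee\{u\in L:\eta(u)=\eta(y)\}$. Property (I9): for any index set $J$ and elements $x,c,z_j$ ($j\in J$) of $L$, if $\eta(x)\le c$ and $\bigwedge_{j\in J}\tau(z_j)\le\tau(c)$, then $\eta(\eta(x)\vee\bigwedge_{j\in J}\tau(x\wedge z_j))\le c$. For coatoms, "$x\wedge z\le a$ properly" means $x\wedge z\le a$ while $x\not\le a$ and $z\not\le a$. *)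

theory Defs
  imports Main
begin

text \<open>The lattice L is the type 'a (a complete lattice); L = UNIV.\<close>

definition compact_el :: "'a::complete_lattice \<Rightarrow> bool" where
  "compact_el c \<longleftrightarrow> (\<forall>A. c \<le> Sup A \<longrightarrow> (\<exists>F. finite F \<and> F \<subseteq> A \<and> c \<le> Sup F))"

definition algebraic_lattice :: "'a::complete_lattice itself \<Rightarrow> bool" where
  "algebraic_lattice _ \<longleftrightarrow> (\<forall>x::'a. x = Sup {c. compact_el c \<and> c \<le> x})"

definition coatom :: "'a::complete_lattice \<Rightarrow> bool" where
  "coatom x \<longleftrightarrow> x < top \<and> (\<forall>y. x < y \<longrightarrow> y = top)"

definition properly_below :: "'a::complete_lattice \<Rightarrow> 'a \<Rightarrow> 'a \<Rightarrow> bool" where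
  "properly_below x z a \<longleftrightarrow> inf x z \<le> a \<and> \<not> x \<le> a \<and> \<not> z \<le> a"

definition join_semilattice_0 :: "'b set \<Rightarrow> ('b \<Rightarrow> 'b \<Rightarrow> 'b) \<Rightarrow> 'b \<Rightarrow> bool" where
  "join_semilattice_0 S j e \<longleftrightarrow>
     (\<forall>x\<in>S. \<forall>y\<in>S. j x y \<in> S) \<and> e \<in> S \<and>
     (\<forall>x\<in>S. \<forall>y\<in>S. \<forall>z\<in>S. j (j x y) z = j x (j y z)) \<and>
     (\<forall>x\<in>S. \<forall>y\<in>S. j x y = j y x) \<and>
     (\<forall>x\<in>S. j x x = x) \<and>
     (\<forall>x\<in>S. j e x = x)"

text \<open>Congruences of the algebra (S, j, e): equivalence relations on S compatible with j
  (compatibility with the constant e is automatic).\<close>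
definition sl_congruences :: "'b set \<Rightarrow> ('b \<Rightarrow> 'b \<Rightarrow> 'b) \<Rightarrow> ('b \<times> 'b) set set" where
  "sl_congruences S j = {\<theta>. equiv S \<theta> \<and>
     (\<forall>x1 y1 x2 y2. (x1, y1) \<in> \<theta> \<longrightarrow> (x2, y2) \<in> \<theta> \<longrightarrow> (j x1 x2, j y1 y2) \<in> \<theta>)}"

definition tau :: "('a::complete_lattice \<Rightarrow> 'a) \<Rightarrow> 'a \<Rightarrow> 'a" where
  "tau \<eta> y = Sup {u. \<eta> u = \<eta> y}"

definition equa_interior :: "('a::complete_lattice \<Rightarrow> 'a) \<Rightarrow> bool" where
  "equa_interior \<eta> \<longleftrightarrow>
     (\<forall>x. \<eta> x \<le> x) \<and>
     (\<forall>x y. y \<le> x \<longrightarrow> \<eta> y \<le> \<eta> x) \<and>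
     (\<forall>x. \<eta> (\<eta> x) = \<eta> x) \<and>
     \<eta> top = top \<and>
     (\<forall>X u. X \<noteq> {} \<longrightarrow> (\<forall>x\<in>X. \<eta> x = u) \<longrightarrow> \<eta> (Sup X) = u) \<and>
     (\<forall>x y z. sup (\<eta> x) (inf y z) = inf (sup (\<eta> x) y) (sup (\<eta> x) z)) \<and>
     range \<eta> = {Sup A | A. A \<subseteq> {c \<in> range \<eta>. compact_el c}} \<and>
     (\<exists>w. compact_el w \<and> \<eta> w = w \<and>
        (\<exists>(S::'a set) j e f. join_semilattice_0 S j e \<and>
           bij_betw f {w..} (sl_congruences S j) \<and>
           (\<forall>x\<in>{w..}. \<forall>y\<in>{w..}. x \<le> y \<longleftrightarrow> f x \<subseteq> f y)))"

definition prop_I9 :: "('a::complete_lattice \<Rightarrow> 'a) \<Rightarrow> bool" where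
  "prop_I9 \<eta> \<longleftrightarrow>
     (\<forall>(J::'a set) (zz::'a \<Rightarrow> 'a) x c.
        \<eta> x \<le> c \<longrightarrow> (INF j\<in>J. tau \<eta> (zz j)) \<le> tau \<eta> c \<longrightarrow>
        \<eta> (sup (\<eta> x) (INF j\<in>J. tau \<eta> (inf x (zz j)))) \<le> c)"

end

theory Submission
  imports Defs
begin

text \<open>If \<open>x \<sqinter> z \<le> a\<close> properly for coatoms \<open>x, z\<close>, distributivity (I6) over \<open>\<eta>(a)\<close>
  forces \<open>\<eta>(a) \<le> x \<sqinter> z\<close>, so \<open>a\<close> and \<open>x \<sqinter> z\<close> have the same interior and \<open>a \<le> \<tau>(x \<sqinter> z)\<close>.
  Coatoms are fixed by \<open>\<tau>\<close>, so if \<open>\<Sqinter>z\<^sub>i \<le> x\<close>, property (I9) with \<open>c = \<eta>(x)\<close> yields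
  \<open>\<Sqinter>\<tau>(x \<sqinter> z\<^sub>i) \<le> x\<close>, whence \<open>\<Sqinter>a\<^sub>i \<le> x\<close>.\<close>

lemma equa_interior_deflationary: "equa_interior \<eta> \<Longrightarrow> \<eta> x \<le> x"
  unfolding equa_interior_def by simp

lemma equa_interior_mono: "equa_interior \<eta> \<Longrightarrow> y \<le> x \<Longrightarrow> \<eta> y \<le> \<eta> x"
  unfolding equa_interior_def by simp

lemma equa_interior_idem: "equa_interior \<eta> \<Longrightarrow> \<eta> (\<eta> x) = \<eta> x"
  unfolding equa_interior_def by simp

lemma equa_interior_top: "equa_interior \<eta> \<Longrightarrow> \<eta> top = top"
  unfolding equa_interior_def by simp

lemma equa_interior_Sup_const:
  "equa_interior \<eta> \<Longrightarrow> X \<noteq> {} \<Longrightarrow> (\<And>x. x \<in> X \<Longrightarrow> \<eta> x = u) \<Longrightarrow> \<eta> (Sup X) = u"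
  unfolding equa_interior_def by simp

lemma equa_interior_sup_inf_distrib:
  "equa_interior \<eta> \<Longrightarrow> sup (\<eta> x) (inf y z) = inf (sup (\<eta> x) y) (sup (\<eta> x) z)"
  unfolding equa_interior_def by simp

lemma le_tau: "\<eta> u = \<eta> y \<Longrightarrow> u \<le> tau \<eta> y"
  unfolding tau_def by (rule Sup_upper) simp

lemma eta_tau: "equa_interior \<eta> \<Longrightarrow> \<eta> (tau \<eta> y) = \<eta> y"
  unfolding tau_def by (rule equa_interior_Sup_const) auto

lemma tau_eta: "equa_interior \<eta> \<Longrightarrow> tau \<eta> (\<eta> y) = tau \<eta> y"
  unfolding tau_def by (simp add: equa_interior_idem)

lemma tau_coatom:
  assumes "equa_interior \<eta>" and "coatom y"
  shows "tau \<eta> y = y"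
proof -
  have "y \<le> tau \<eta> y" by (rule le_tau) simp
  moreover have "tau \<eta> y \<noteq> top"
  proof
    assume "tau \<eta> y = top"
    then have "\<eta> y = top"
      using eta_tau[OF assms(1)] equa_interior_top[OF assms(1)] by metis
    then show False
      using equa_interior_deflationary[OF assms(1), of y] assms(2)
      unfolding coatom_def by (simp add: top_le)
  qed
  ultimately show ?thesis
    using assms(2) unfolding coatom_def by (metis less_le)
qed

lemma coatom_sup_eq_top:
  assumes "coatom x" and "\<not> y \<le> x"
  shows "sup y x = top"
proof -
  have "x < sup y x" using assms(2) by (simp add: less_le_not_le)
  then show ?thesis using assms(1) unfolding coatom_def by blast
qed

lemma eta_le_inf_if_properly_below:
  assumes "equa_interior \<eta>" and "coatom x" and "coatom z"
    and "properly_below x z a"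
  shows "\<eta> a \<le> inf x z"
proof -
  have distrib: "sup (\<eta> a) (inf x z) = inf (sup (\<eta> a) x) (sup (\<eta> a) z)"
    by (rule equa_interior_sup_inf_distrib[OF assms(1)])
  have below_a: "sup (\<eta> a) (inf x z) \<le> a"
    using assms(4) equa_interior_deflationary[OF assms(1), of a]
    unfolding properly_below_def by simp
  have "\<eta> a \<le> x"
  proof (rule ccontr)
    assume "\<not> \<eta> a \<le> x"
    with assms(2) have "sup (\<eta> a) x = top" by (rule coatom_sup_eq_top)
    then have "z \<le> a" using distrib below_a by simp
    then show False using assms(4) unfolding properly_below_def by blast
  qed
  moreover have "\<eta> a \<le> z"
  proof (rule ccontr)
    assume "\<not> \<eta> a \<le> z"
    with assms(3) have "sup (\<eta> a) z = top" by (rule coatom_sup_eq_top)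
    then have "x \<le> a" using distrib below_a by simp
    then show False using assms(4) unfolding properly_below_def by blast
  qed
  ultimately show ?thesis by simp
qed

lemma le_tau_inf_if_properly_below:
  assumes "equa_interior \<eta>" and "coatom x" and "coatom z"
    and "properly_below x z a"
  shows "a \<le> tau \<eta> (inf x z)"
proof (rule le_tau, rule order.antisym)
  show "\<eta> a \<le> \<eta> (inf x z)"
    using equa_interior_mono[OF assms(1) eta_le_inf_if_properly_below[OF assms]]
    by (simp add: equa_interior_idem[OF assms(1)])
  show "\<eta> (inf x z) \<le> \<eta> a"
    using assms(4) unfolding properly_below_def by (simp add: equa_interior_mono[OF assms(1)])
qed

text \<open>The instance \<open>c = \<eta>(x)\<close> of (I9). Its index set ranges over the lattice itself,
  so a family indexed by \<open>I\<close> is passed as its image \<open>z ` I\<close>, indexed by the identity.\<close>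

lemma prop_I9_INF_tau_inf_le:
  assumes "equa_interior \<eta>" and "prop_I9 \<eta>"
    and "(INF i\<in>I. tau \<eta> (z i)) \<le> tau \<eta> x"
  shows "(INF i\<in>I. tau \<eta> (inf x (z i))) \<le> tau \<eta> x"
proof -
  define V where "V = (INF i\<in>I. tau \<eta> (inf x (z i)))"
  have "\<eta> (sup (\<eta> x) (INF j\<in>z ` I. tau \<eta> (inf x (id j)))) \<le> \<eta> x"
    using assms(2)[unfolded prop_I9_def, rule_format, where J="z ` I" and zz=id and x=x and c="\<eta> x"]
    by (simp add: assms(3) image_comp tau_eta[OF assms(1)])
  then have "\<eta> (sup (\<eta> x) V) \<le> \<eta> x"
    unfolding V_def by (simp add: image_comp)
  moreover have "\<eta> x \<le> \<eta> (sup (\<eta> x) V)"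
    using equa_interior_mono[OF assms(1), of "\<eta> x" "sup (\<eta> x) V"]
    by (simp add: equa_interior_idem[OF assms(1)])
  ultimately have "\<eta> (sup (\<eta> x) V) = \<eta> x" by (rule order.antisym)
  then have "sup (\<eta> x) V \<le> tau \<eta> x" by (rule le_tau)
  then show ?thesis unfolding V_def by simp
qed

theorem theorem7p6:
  fixes \<eta> :: "'a::complete_lattice \<Rightarrow> 'a"
    and x :: 'a and a z :: "'i \<Rightarrow> 'a" and I :: "'i set"
  assumes "algebraic_lattice TYPE('a)"
    and "equa_interior \<eta>"
    and "prop_I9 \<eta>"
    and "coatom x"
    and "\<forall>i\<in>I. coatom (a i) \<and> coatom (z i)"
    and "\<forall>i\<in>I. properly_below x (z i) (a i)"
    and "\<not> (INF i\<in>I. a i) \<le> x"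
  shows "\<not> (INF i\<in>I. z i) \<le> x"
proof
  assume "(INF i\<in>I. z i) \<le> x"
  then have "(INF i\<in>I. tau \<eta> (z i)) \<le> tau \<eta> x"
    using assms(5) by (simp add: tau_coatom[OF assms(2)] tau_coatom[OF assms(2,4)])
  then have "(INF i\<in>I. tau \<eta> (inf x (z i))) \<le> tau \<eta> x"
    by (rule prop_I9_INF_tau_inf_le[OF assms(2,3)])
  then have "(INF i\<in>I. tau \<eta> (inf x (z i))) \<le> x"
    by (simp add: tau_coatom[OF assms(2,4)])
  moreover have "(INF i\<in>I. a i) \<le> (INF i\<in>I. tau \<eta> (inf x (z i)))"
    using assms(4-6) le_tau_inf_if_properly_below[OF assms(2)] by (auto intro: INF_superset_mono)
  ultimately show False using assms(7) by (meson order.trans)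
qed

end
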